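(* Let $n\geq 3$ be an integer and $p$ a prime with $\gcd(n,p(p-1))=1$. Then: (i) for every integer $r\geq\lfloor n/2\rfloor+1$ and all nonzero integers $a_1,\ldots,a_r$, the form $F=a_1x_1^n+\cdots+a_rx_r^n$ satisfies that $R(F)$ is dense in $\mathbb{Q}_p$; (ii) there exist nonzero integers $a_1,\ldots,a_s$ with $s=\lfloor n/2\rfloor$ such that for $F=a_1x_1^n+\cdots+a_sx_s^n$ the set $R(F)$ is not dense in $\mathbb{Q}_p$. Thus $\lfloor n/2\rfloor+1=\lceil (n+1)/2\rceil$ is the least $r$ such that every integral diagonal form of degree $n$ with all coefficients nonzero in at least $r$ variables has $R(F)$ dense in $\mathbb{Q}_p$.
   Context: For an integral form $F$ in $r$ variables, $R(F)=\{F(\overline{x})/F(\overline{y}):\overline{x},\overline{y}\in\mathbb{Z}^r,\ F(\overline{y})\neq 0\}$, viewed as a subset of the field $\mathbb{Q}_p$ of $p$-adic numbers with its $p$-adic topology. *)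

theory Defs
  imports Complex_Main "HOL-Computational_Algebra.Computational_Algebra"
begin

definition diag_form :: "nat \<Rightarrow> nat \<Rightarrow> (nat \<Rightarrow> int) \<Rightarrow> (nat \<Rightarrow> int) \<Rightarrow> int" where
  "diag_form r n a x = (\<Sum>i<r. a i * x i ^ n)"

definition ratio_set :: "nat \<Rightarrow> ((nat \<Rightarrow> int) \<Rightarrow> int) \<Rightarrow> rat set" where
  "ratio_set r F = {of_int (F x) / of_int (F y) | x y.
      (\<forall>i\<ge>r. x i = 0) \<and> (\<forall>i\<ge>r. y i = 0) \<and> F y \<noteq> 0}"

definition padic_val_rat :: "nat \<Rightarrow> rat \<Rightarrow> int" where
  "padic_val_rat p q =
     int (multiplicity (int p) (fst (quotient_of q))) - int (multiplicity (int p) (snd (quotient_of q)))"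

definition padic_abs :: "nat \<Rightarrow> rat \<Rightarrow> real" where
  "padic_abs p q = (if q = 0 then 0 else real p powr (- real_of_int (padic_val_rat p q)))"

text \<open>A set S of rationals is dense in Q_p (Q being dense in Q_p, this is
  equivalent to: every rational is a p-adic limit of elements of S).\<close>
definition padic_dense :: "nat \<Rightarrow> rat set \<Rightarrow> bool" where
  "padic_dense p S \<longleftrightarrow> (\<forall>q::rat. \<forall>\<epsilon>::real. \<epsilon> > 0 \<longrightarrow> (\<exists>s\<in>S. padic_abs p (s - q) < \<epsilon>))"

end

(*
  Write v for the p-adic valuation. Since n is prime to p(p-1), the n-th power map is a
  bijection on the units modulo every p^N. Hence one term a_i x_i^n approximates every
  p-adic number of valuation v(a_i) + n t, and two terms whose coefficients have valuations
  congruent modulo n approximate every number of large valuation (the second term shifts the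
  unit part of the first). A ratio F(x)/F(y) approximates an arbitrary q as soon as every
  integer is a difference of two such valuations. With more than n/2 coefficients this holds:
  either two residues v(a_i) mod n coincide or, by pigeonhole, the residues meet every
  translate of themselves.
  Conversely, for F = sum_{i<s} p^i x_i^n with s = n div 2 the terms of F(x) have pairwise
  distinct valuations modulo n, so v(F(x)) mod n < s; then v(F(x)/F(y)) is never s modulo n,
  and no ratio is close to p^s.
*)

theory Submission
  imports Defs "HOL-Number_Theory.Number_Theory"
begin

lemma cong_nth_power_solvable:
  fixes m n :: nat and u :: int
  assumes "n > 0" "coprime n (totient m)" "coprime u (int m)"
  shows "\<exists>z. [z ^ n = u] (mod int m)"
proof (cases "m \<le> 1")
  case True
  then consider "m = 0" | "m = 1" by linarith
  then show ?thesis
  proof cases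
    case 1
    then show ?thesis using assms by (intro exI[of _ u]) simp
  qed simp
next
  case False
  obtain x y where xy: "n * x = totient m * y + 1"
    using bezout_nat[of n "totient m"] assms(1,2) by auto
  interpret residues "int m" "residue_ring (int m)"
    using False by unfold_locales simp
  have euler: "[u ^ totient m = 1] (mod int m)"
    using euler_theorem[of u] assms(3) False by simp
  have "(u ^ x) ^ n = (u ^ totient m) ^ y * u"
    by (simp flip: power_mult power_Suc2 add: xy mult.commute)
  also have "[\<dots> = 1 ^ y * u] (mod int m)"
    by (intro cong_mult cong_pow cong_refl euler)
  finally show ?thesis by auto
qed

lemma cong_unit_mult_nth_power_solvable:
  fixes m n :: nat and c u :: int
  assumes "n > 0" "coprime n (totient m)" "coprime c (int m)" "coprime u (int m)"
  shows "\<exists>z. [c * z ^ n = u] (mod int m)"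
proof -
  obtain c' where c': "[c * c' = 1] (mod int m)"
    using cong_solve_coprime_int[OF assms(3)] by blast
  have "coprime c' (int m)"
    using c' by (metis cong_imp_coprime cong_sym coprime_1_left coprime_mult_left_iff)
  then obtain z where z: "[z ^ n = c' * u] (mod int m)"
    using cong_nth_power_solvable[OF assms(1,2), of "c' * u"] assms(4) by auto
  have "[c * z ^ n = c * (c' * u)] (mod int m)" by (intro cong_mult cong_refl z)
  also have "c * (c' * u) = (c * c') * u" by simp
  also have "[\<dots> = 1 * u] (mod int m)" by (intro cong_mult cong_refl c')
  finally show ?thesis by auto
qed

lemma prime_power_unit_mult_nth_power_solvable:
  fixes c u :: int
  assumes "prime p" "coprime n (p * (p - 1))" "n > 0" "\<not> int p dvd c" "\<not> int p dvd u"
  shows "\<exists>z. int p ^ N dvd c * z ^ n - u"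
proof -
  have "coprime n (totient (p ^ N))"
    using assms(1,2) by (cases "N = 0") (simp_all add: totient_prime_power)
  moreover have "coprime c (int p)" "coprime u (int p)"
    using assms(1,4,5) by (metis coprime_commute prime_imp_coprime prime_nat_int_transfer)+
  then have "coprime c (int (p ^ N))" "coprime u (int (p ^ N))" by simp_all
  ultimately show ?thesis
    using cong_unit_mult_nth_power_solvable[OF assms(3)] by (metis cong_iff_dvd_diff of_nat_power)
qed

lemma residues_meet_shifted_residues:
  fixes g :: "'b \<Rightarrow> int" and n :: nat
  assumes "finite I" "n > 0" "n < 2 * card I" "inj_on (\<lambda>i. g i mod int n) I"
  shows "\<exists>i\<in>I. \<exists>j\<in>I. [g i = g j + k] (mod int n)"
proof -
  define A where "A = (\<lambda>i. g i mod int n) ` I"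
  define B where "B = (\<lambda>j. (g j + k) mod int n) ` I"
  have "inj_on (\<lambda>j. (g j + k) mod int n) I"
  proof (rule inj_onI)
    fix x y assume "x \<in> I" "y \<in> I" "(g x + k) mod int n = (g y + k) mod int n"
    then have "g x mod int n = g y mod int n" using cong_add_rcancel unfolding cong_def by blast
    then show "x = y" using inj_onD[OF assms(4)] \<open>x \<in> I\<close> \<open>y \<in> I\<close> by blast
  qed
  then have "card A + card B = 2 * card I"
    using assms(4) unfolding A_def B_def by (simp add: card_image)
  moreover have "A \<union> B \<subseteq> {0..<int n}" using assms(2) unfolding A_def B_def by auto
  then have "card (A \<union> B) \<le> card {0..<int n}" by (intro card_mono) simp_all
  moreover have "card A + card B = card (A \<union> B) + card (A \<inter> B)"
    using assms(1) unfolding A_def B_def by (intro card_Un_Int) simp_all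
  ultimately have "card (A \<inter> B) \<noteq> 0" using assms(3) by simp
  then obtain c where "c \<in> A \<inter> B" by (metis card.empty ex_in_conv)
  then obtain i j where "i \<in> I" "j \<in> I" "g i mod int n = (g j + k) mod int n"
    unfolding A_def B_def by auto
  then show ?thesis unfolding cong_def by blast
qed

lemma multiplicity_add_higher:
  fixes p a b :: "'a :: factorial_semiring_multiplicative"
  assumes "\<not> is_unit p" "a \<noteq> 0" "p ^ (multiplicity p a + 1) dvd b"
  shows "multiplicity p (a + b) = multiplicity p a"
proof (cases "b = 0")
  case False
  then have "multiplicity p a < multiplicity p b"
    using multiplicity_geI[OF False assms(1,3)] by simp
  then show ?thesis using multiplicity_sum_lt assms(2) False by blast
qed simp

lemma multiplicity_decompose_prime_int:
  assumes "prime p" "a \<noteq> 0"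
  obtains \<alpha> where "a = int p ^ multiplicity (int p) a * \<alpha>" "\<not> int p dvd \<alpha>"
proof -
  have "\<not> is_unit (int p)" using prime_gt_1_nat[OF assms(1)] by simp
  then show thesis using multiplicity_decompose'[OF assms(2)] that by blast
qed

lemma multiplicity_prime_power_mult_power:
  assumes "prime p" "X \<noteq> 0"
  shows "multiplicity (int p) (int p ^ l * X ^ n) = l + n * multiplicity (int p) X"
proof -
  have "prime_elem (int p)" using assms(1) by simp
  moreover have "int p ^ l \<noteq> 0" "X ^ n \<noteq> 0" using assms by (simp_all add: prime_gt_0_nat)
  ultimately show ?thesis
    using assms(2)
    by (simp add: prime_elem_multiplicity_mult_distrib prime_elem_multiplicity_power_distrib)
qed

lemma multiplicity_sum_eq_term:
  fixes f :: "'b \<Rightarrow> 'a :: factorial_semiring_multiplicative"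
  assumes "finite I" "sum f I \<noteq> 0"
    and "\<And>i j. i \<in> I \<Longrightarrow> j \<in> I \<Longrightarrow> f i \<noteq> 0 \<Longrightarrow> f j \<noteq> 0 \<Longrightarrow>
           multiplicity p (f i) = multiplicity p (f j) \<Longrightarrow> i = j"
  shows "\<exists>i\<in>I. f i \<noteq> 0 \<and> multiplicity p (sum f I) = multiplicity p (f i)"
  using assms
proof (induction I rule: finite_induct)
  case (insert i I)
  have sum: "sum f (insert i I) = f i + sum f I" using insert.hyps by simp
  show ?case
  proof (cases "f i = 0 \<or> sum f I = 0")
    case True
    then show ?thesis using insert by (fastforce simp: sum)
  next
    case False
    then obtain j where j: "j \<in> I" "f j \<noteq> 0" "multiplicity p (sum f I) = multiplicity p (f j)"
      using insert by auto
    then have "multiplicity p (f i) \<noteq> multiplicity p (sum f I)"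
      using insert.prems(2)[of i j] insert.hyps(2) False by auto
    then have "multiplicity p (sum f (insert i I)) =
        min (multiplicity p (f i)) (multiplicity p (sum f I))"
      using multiplicity_sum_min False unfolding sum by blast
    then show ?thesis using j False by (auto simp: min_def)
  qed
qed simp

lemma padic_val_rat_of_int_div:
  fixes X Y :: int
  assumes "prime p" "X \<noteq> 0" "Y \<noteq> 0"
  shows "padic_val_rat p (of_int X / of_int Y) =
         int (multiplicity (int p) X) - int (multiplicity (int p) Y)"
proof -
  obtain a b where ab: "quotient_of (of_int X / of_int Y) = (a, b)"
    by (cases "quotient_of (of_int X / of_int Y)")
  have "b > 0" using quotient_of_denom_pos[OF ab] .
  moreover have "(of_int X / of_int Y :: rat) = of_int a / of_int b"
    using quotient_of_div[OF ab] .
  ultimately have "a * Y = X * b" "a \<noteq> 0"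
    using assms(2,3) by (auto simp: frac_eq_eq simp flip: of_int_mult)
  moreover have "prime_elem (int p)" using assms(1) by simp
  ultimately have "multiplicity (int p) a + multiplicity (int p) Y =
      multiplicity (int p) X + multiplicity (int p) b"
    using prime_elem_multiplicity_mult_distrib assms \<open>b > 0\<close> by (metis less_irrefl)
  then show ?thesis unfolding padic_val_rat_def ab by simp
qed

lemma rat_prime_power_unit_decomposition:
  fixes q :: rat
  assumes "prime p" "q \<noteq> 0"
  obtains k1 k2 b c where "q = of_int (int p ^ k1 * b) / of_int (int p ^ k2 * c)"
    "\<not> int p dvd b" "\<not> int p dvd c"
proof -
  obtain A B where AB: "quotient_of q = (A, B)" by (cases "quotient_of q")
  then have q: "q = of_int A / of_int B" and "B \<noteq> 0"
    using quotient_of_div quotient_of_denom_pos by fastforce+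
  then have "A \<noteq> 0" using assms(2) by auto
  show thesis
    using multiplicity_decompose_prime_int[OF assms(1) \<open>A \<noteq> 0\<close>]
      multiplicity_decompose_prime_int[OF assms(1) \<open>B \<noteq> 0\<close>] that q by metis
qed

lemma padic_abs_of_int_div_less_iff:
  fixes Y Z :: int
  assumes "prime p" "Y \<noteq> 0"
  shows "padic_abs p (of_int Z / of_int Y) < real p powr - real m \<longleftrightarrow>
         int p ^ (m + multiplicity (int p) Y + 1) dvd Z"
proof (cases "Z = 0")
  case False
  have "\<not> is_unit (int p)" using prime_gt_1_nat[OF assms(1)] by simp
  have "padic_abs p (of_int Z / of_int Y) =
      real p powr - (real (multiplicity (int p) Z) - real (multiplicity (int p) Y))"
    using padic_val_rat_of_int_div[OF assms(1) False assms(2)] False assms(2)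
    by (simp add: padic_abs_def)
  moreover have "real p > 1" using prime_gt_1_nat[OF assms(1)] by simp
  ultimately have "padic_abs p (of_int Z / of_int Y) < real p powr - real m \<longleftrightarrow>
      m + multiplicity (int p) Y + 1 \<le> multiplicity (int p) Z"
    by (simp add: powr_less_cancel_iff) linarith
  also have "\<dots> \<longleftrightarrow> int p ^ (m + multiplicity (int p) Y + 1) dvd Z"
    by (rule power_dvd_iff_le_multiplicity[OF False \<open>\<not> is_unit (int p)\<close>, symmetric])
  finally show ?thesis .
qed (use assms(1) prime_gt_0_nat in \<open>simp add: padic_abs_def\<close>)

lemma diag_form_zero:
  assumes "n > 0"
  shows "diag_form r n a (\<lambda>_. 0) = 0"
  using assms by (simp add: diag_form_def zero_power)

lemma diag_form_single:
  assumes "i < r" "n > 0"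
  shows "diag_form r n a (\<lambda>l. if l = i then X else 0) = a i * X ^ n"
proof -
  have "diag_form r n a (\<lambda>l. if l = i then X else 0) =
      (\<Sum>l<r. if l = i then a i * X ^ n else 0)"
    unfolding diag_form_def using assms(2) by (intro sum.cong) (auto simp: zero_power)
  then show ?thesis using assms(1) by simp
qed

lemma diag_form_pair:
  assumes "i < r" "j < r" "i \<noteq> j" "n > 0"
  shows "diag_form r n a (\<lambda>l. if l = i then X else if l = j then Y else 0) =
    a i * X ^ n + a j * Y ^ n"
proof -
  have "diag_form r n a (\<lambda>l. if l = i then X else if l = j then Y else 0) =
      (\<Sum>l<r. (if l = i then a i * X ^ n else 0) + (if l = j then a j * Y ^ n else 0))"
    unfolding diag_form_def using assms by (intro sum.cong) (auto simp: zero_power)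
  then show ?thesis using assms by (simp add: sum.distrib)
qed

text \<open>Every p-adic number of exact valuation e is a limit of values of F.\<close>
definition represents_valuation ::
    "nat \<Rightarrow> nat \<Rightarrow> ((nat \<Rightarrow> int) \<Rightarrow> int) \<Rightarrow> nat \<Rightarrow> bool" where
  "represents_valuation p r F e \<longleftrightarrow> (\<forall>w N. \<not> int p dvd w \<longrightarrow>
     (\<exists>x. (\<forall>i\<ge>r. x i = 0) \<and> int p ^ (e + N) dvd F x - int p ^ e * w))"

lemma represents_valuationE:
  assumes "represents_valuation p r F e" "\<not> int p dvd w"
  obtains x \<gamma> where "\<forall>i\<ge>r. x i = 0" "F x = int p ^ e * (w + int p ^ N * \<gamma>)"
proof -
  obtain x \<gamma> where "\<forall>i\<ge>r. x i = 0" "F x - int p ^ e * w = int p ^ (e + N) * \<gamma>"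
    using assms unfolding represents_valuation_def by (meson dvdE)
  then show thesis using that[of x \<gamma>] by (simp add: power_add algebra_simps)
qed

lemma ratio_set_approximates_nonzero:
  assumes p: "prime p" and "q \<noteq> 0"
    and diffs: "\<And>k::int. \<exists>e1 e2. represents_valuation p r F e1 \<and>
                  represents_valuation p r F e2 \<and> int e1 - int e2 = k"
  shows "\<exists>t\<in>ratio_set r F. padic_abs p (t - q) < real p powr - real M"
proof -
  obtain k1 k2 b c where q: "q = of_int (int p ^ k1 * b) / of_int (int p ^ k2 * c)"
    and b: "\<not> int p dvd b" and c: "\<not> int p dvd c"
    using rat_prime_power_unit_decomposition[OF p \<open>q \<noteq> 0\<close>] .
  define A where "A = int p ^ k1 * b"
  define B where "B = int p ^ k2 * c"
  obtain e1 e2 where e1: "represents_valuation p r F e1" and e2: "represents_valuation p r F e2"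
    and e12: "int e1 - int e2 = int k1 - int k2"
    using diffs by blast
  define N where "N = M + k2 + 1"
  obtain x \<gamma> where x: "\<forall>i\<ge>r. x i = 0" "F x = int p ^ e1 * (b + int p ^ N * \<gamma>)"
    using represents_valuationE[OF e1 b] by blast
  obtain y \<delta> where y: "\<forall>i\<ge>r. y i = 0" "F y = int p ^ e2 * (c + int p ^ N * \<delta>)"
    using represents_valuationE[OF e2 c] by blast
  have "prime (int p)" using p by simp
  have "int p dvd int p ^ N * \<delta>" by (simp add: N_def)
  then have "\<not> int p dvd (c + int p ^ N * \<delta>) * c"
    using c \<open>prime (int p)\<close> by (simp add: prime_dvd_mult_iff dvd_add_left_iff)
  moreover have FyB: "F y * B = int p ^ (e2 + k2) * ((c + int p ^ N * \<delta>) * c)"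
    using y(2) unfolding B_def by (simp add: power_add algebra_simps)
  ultimately have "F y * B \<noteq> 0" "multiplicity (int p) (F y * B) = e2 + k2"
    using multiplicity_decomposeI[OF FyB] p by (auto simp: prime_gt_0_nat)
  then have "F y \<noteq> 0" by auto
  have "e1 + k2 = e2 + k1" using e12 by linarith
  then have "int p ^ e1 * int p ^ k2 = int p ^ e2 * int p ^ k1" by (simp flip: power_add)
  then have "F x * B - A * F y = int p ^ (e1 + k2) * int p ^ N * (\<gamma> * c - b * \<delta>)"
    unfolding x(2) y(2) A_def B_def by (simp add: power_add algebra_simps)
  moreover have "M + multiplicity (int p) (F y * B) + 1 \<le> e1 + k2 + N"
    using \<open>multiplicity (int p) (F y * B) = e2 + k2\<close> e12 by (simp add: N_def)
  ultimately have "int p ^ (M + multiplicity (int p) (F y * B) + 1) dvd F x * B - A * F y"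
    by (metis dvd_mult2 le_imp_power_dvd power_add)
  moreover have "of_int (F x) / of_int (F y) - q = of_int (F x * B - A * F y) / of_int (F y * B)"
    using \<open>F y * B \<noteq> 0\<close> unfolding q A_def[symmetric] B_def[symmetric] by (simp add: field_simps)
  moreover have "of_int (F x) / of_int (F y) \<in> ratio_set r F"
    using x(1) y(1) \<open>F y \<noteq> 0\<close> unfolding ratio_set_def by blast
  ultimately show ?thesis
    using padic_abs_of_int_div_less_iff[OF p \<open>F y * B \<noteq> 0\<close>] by metis
qed

lemma padic_dense_ratio_setI:
  assumes p: "prime p" and "F (\<lambda>_. 0) = 0"
    and diffs: "\<And>k::int. \<exists>e1 e2. represents_valuation p r F e1 \<and>
                  represents_valuation p r F e2 \<and> int e1 - int e2 = k"
  shows "padic_dense p (ratio_set r F)"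
  unfolding padic_dense_def
proof (intro allI impI)
  fix q :: rat and \<epsilon> :: real
  assume "\<epsilon> > 0"
  have "real p > 1" using prime_gt_1_nat[OF p] by simp
  then obtain M :: nat where "(1 / real p) ^ M < \<epsilon>"
    using real_arch_pow_inv[OF \<open>\<epsilon> > 0\<close>, of "1 / real p"] by auto
  then have M: "real p powr - real M < \<epsilon>"
    using \<open>real p > 1\<close> by (simp add: powr_minus powr_realpow power_one_over inverse_eq_divide)
  show "\<exists>t\<in>ratio_set r F. padic_abs p (t - q) < \<epsilon>"
  proof (cases "q = 0")
    case True
    have p_nonunit: "\<not> int p dvd 1" using prime_gt_1_nat[OF p] by simp
    obtain e where "represents_valuation p r F e" using diffs by blast
    then obtain y \<delta> where y: "\<forall>i\<ge>r. y i = 0" "F y = int p ^ e * (1 + int p ^ 1 * \<delta>)"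
      using represents_valuationE p_nonunit by blast
    have "\<not> int p dvd 1 + int p * \<delta>" using p_nonunit by (simp add: dvd_add_left_iff)
    then have "F y \<noteq> 0" using y(2) p by (auto simp: prime_gt_0_nat)
    moreover have "(0::rat) = of_int (F (\<lambda>_. 0)) / of_int (F y)" using assms(2) by simp
    ultimately have "0 \<in> ratio_set r F" unfolding ratio_set_def using y(1) by blast
    then show ?thesis using True \<open>\<epsilon> > 0\<close> by (intro bexI[of _ 0]) (simp_all add: padic_abs_def)
  next
    case False
    then obtain t where "t \<in> ratio_set r F" "padic_abs p (t - q) < real p powr - real M"
      using ratio_set_approximates_nonzero[OF p False diffs] by blast
    then show ?thesis using M by force
  qed
qed

lemma diag_form_represents_valuation_single:
  assumes p: "prime p" and cp: "coprime n (p * (p - 1))" and "n > 0" "i < r" "a i \<noteq> 0"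
  shows "represents_valuation p r (diag_form r n a) (multiplicity (int p) (a i) + n * t)"
  unfolding represents_valuation_def
proof (intro allI impI)
  fix w N assume w: "\<not> int p dvd w"
  define v where "v = multiplicity (int p) (a i)"
  obtain \<alpha> where \<alpha>: "a i = int p ^ v * \<alpha>" "\<not> int p dvd \<alpha>"
    using multiplicity_decompose_prime_int[OF p \<open>a i \<noteq> 0\<close>] unfolding v_def by blast
  obtain z where z: "int p ^ N dvd \<alpha> * z ^ n - w"
    using prime_power_unit_mult_nth_power_solvable[OF p cp \<open>n > 0\<close> \<alpha>(2) w] by blast
  define x where "x = (\<lambda>l. if l = i then int p ^ t * z else 0)"
  have "diag_form r n a x - int p ^ (v + n * t) * w = int p ^ (v + n * t) * (\<alpha> * z ^ n - w)"
    unfolding x_def diag_form_single[OF \<open>i < r\<close> \<open>n > 0\<close>] \<alpha>(1)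
    by (simp add: power_mult_distrib power_add algebra_simps flip: power_mult)
  moreover have "\<forall>l\<ge>r. x l = 0" unfolding x_def using \<open>i < r\<close> by auto
  ultimately show "\<exists>x. (\<forall>l\<ge>r. x l = 0) \<and> int p ^ (v + n * t + N) dvd
      diag_form r n a x - int p ^ (v + n * t) * w"
    using z by (metis mult_dvd_mono dvd_refl power_add)
qed

text \<open>With x_i = p^t z and x_j = 1 the value is p^v(a_j) (\<alpha>_i z^n + \<alpha>_j) for units
  \<alpha>_i, \<alpha>_j, and z is chosen to make this congruent to p^e w.\<close>
lemma diag_form_represents_valuation_pair:
  assumes p: "prime p" and cp: "coprime n (p * (p - 1))" and "n > 0"
    and "i < r" "j < r" "i \<noteq> j" "a i \<noteq> 0" "a j \<noteq> 0"
    and vij: "multiplicity (int p) (a j) = multiplicity (int p) (a i) + n * t"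
    and e: "multiplicity (int p) (a j) < e"
  shows "represents_valuation p r (diag_form r n a) e"
  unfolding represents_valuation_def
proof (intro allI impI)
  fix w N assume w: "\<not> int p dvd w"
  define vi where "vi = multiplicity (int p) (a i)"
  define vj where "vj = multiplicity (int p) (a j)"
  obtain \<alpha>i where \<alpha>i: "a i = int p ^ vi * \<alpha>i" "\<not> int p dvd \<alpha>i"
    using multiplicity_decompose_prime_int[OF p \<open>a i \<noteq> 0\<close>] unfolding vi_def by blast
  obtain \<alpha>j where \<alpha>j: "a j = int p ^ vj * \<alpha>j" "\<not> int p dvd \<alpha>j"
    using multiplicity_decompose_prime_int[OF p \<open>a j \<noteq> 0\<close>] unfolding vj_def by blast
  define D where "D = e - vj"
  have "D > 0" "e = vj + D" using e unfolding D_def vj_def by auto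
  define u where "u = int p ^ D * w - \<alpha>j"
  have "int p dvd int p ^ D * w" using \<open>D > 0\<close> by (simp add: dvd_power)
  moreover have "\<alpha>j = int p ^ D * w - u" unfolding u_def by simp
  ultimately have "\<not> int p dvd u" using \<alpha>j(2) by (metis dvd_diff)
  then obtain z where z: "int p ^ (D + N) dvd \<alpha>i * z ^ n - u"
    using prime_power_unit_mult_nth_power_solvable[OF p cp \<open>n > 0\<close> \<alpha>i(2)] by blast
  define x where "x = (\<lambda>l. if l = i then int p ^ t * z else if l = j then 1 else 0)"
  have "diag_form r n a x - int p ^ e * w = int p ^ vj * (\<alpha>i * z ^ n - u)"
    unfolding x_def diag_form_pair[OF \<open>i < r\<close> \<open>j < r\<close> \<open>i \<noteq> j\<close> \<open>n > 0\<close>] \<alpha>i(1) \<alpha>j(1)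
      \<open>e = vj + D\<close> u_def vij[folded vi_def vj_def]
    by (simp add: power_mult_distrib power_add algebra_simps flip: power_mult)
  moreover have "\<forall>l\<ge>r. x l = 0" unfolding x_def using \<open>i < r\<close> \<open>j < r\<close> by auto
  ultimately show "\<exists>x. (\<forall>l\<ge>r. x l = 0) \<and> int p ^ (e + N) dvd diag_form r n a x - int p ^ e * w"
    using z \<open>e = vj + D\<close> by (metis mult_dvd_mono dvd_refl power_add add.assoc)
qed

lemma diag_form_represents_large_valuations:
  assumes p: "prime p" and cp: "coprime n (p * (p - 1))" and "n > 0"
    and ij: "i < r" "j < r" "i \<noteq> j" and a: "a i \<noteq> 0" "a j \<noteq> 0"
    and cong: "[multiplicity (int p) (a i) = multiplicity (int p) (a j)] (mod n)"
  shows "\<exists>e0. \<forall>e>e0. represents_valuation p r (diag_form r n a) e"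
proof (cases "multiplicity (int p) (a i) \<le> multiplicity (int p) (a j)")
  case True
  then obtain t where "multiplicity (int p) (a j) = multiplicity (int p) (a i) + n * t"
    using cong_le_nat cong cong_sym by (metis add.commute mult.commute)
  then show ?thesis
    using diag_form_represents_valuation_pair[OF p cp \<open>n > 0\<close> ij a] by blast
next
  case False
  then obtain t where "multiplicity (int p) (a i) = multiplicity (int p) (a j) + n * t"
    using cong_le_nat cong by (metis add.commute mult.commute nat_le_linear)
  then show ?thesis
    using diag_form_represents_valuation_pair[OF p cp \<open>n > 0\<close> ij(2,1) ij(3)[symmetric] a(2,1)]
    by blast
qed

lemma diag_form_represents_valuation_differences:
  assumes p: "prime p" and cp: "coprime n (p * (p - 1))" and "n > 0"
    and "n < 2 * r" and a: "\<forall>i<r. a i \<noteq> 0"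
  shows "\<exists>e1 e2. represents_valuation p r (diag_form r n a) e1 \<and>
           represents_valuation p r (diag_form r n a) e2 \<and> int e1 - int e2 = k"
proof -
  define v where "v i = multiplicity (int p) (a i)" for i
  have single: "represents_valuation p r (diag_form r n a) (v i + n * t)" if "i < r" for i t
    using diag_form_represents_valuation_single[OF p cp \<open>n > 0\<close> that] a that unfolding v_def by blast
  show ?thesis
  proof (cases "inj_on (\<lambda>i. int (v i) mod int n) {..<r}")
    case True
    then obtain i j where ij: "i < r" "j < r" "[int (v i) = int (v j) + k] (mod int n)"
      using residues_meet_shifted_residues[of "{..<r}" n "\<lambda>i. int (v i)" k] \<open>n > 0\<close> \<open>n < 2 * r\<close>
      by auto
    then obtain d where d: "int (v i) - (int (v j) + k) = int n * d"
      by (metis cong_iff_dvd_diff dvdE)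
    define e1 where "e1 = v i + n * nat (- d)"
    define e2 where "e2 = v j + n * nat d"
    have "int e1 - int e2 = int (v i) - int (v j) + int n * (int (nat (- d)) - int (nat d))"
      unfolding e1_def e2_def by (simp add: algebra_simps)
    also have "\<dots> = k" using d by (simp add: algebra_simps)
    finally show ?thesis using single ij(1,2) unfolding e1_def e2_def by blast
  next
    case False
    then obtain i j where "i < r" "j < r" "i \<noteq> j" "[int (v i) = int (v j)] (mod int n)"
      unfolding inj_on_def cong_def by auto
    then obtain e0 where e0: "\<forall>e>e0. represents_valuation p r (diag_form r n a) e"
      using diag_form_represents_large_valuations[OF p cp \<open>n > 0\<close>] a
      unfolding v_def by (metis cong_int_iff)
    define e2 where "e2 = e0 + 1 + nat \<bar>k\<bar>"
    define e1 where "e1 = nat (int e2 + k)"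
    have "int e1 - int e2 = k" "e0 < e1" "e0 < e2" unfolding e1_def e2_def by auto
    then show ?thesis using e0 by blast
  qed
qed

lemma diag_form_ratio_set_padic_dense:
  assumes "prime p" "coprime n (p * (p - 1))" "n > 0" "n < 2 * r" "\<forall>i<r. a i \<noteq> 0"
  shows "padic_dense p (ratio_set r (diag_form r n a))"
  by (intro padic_dense_ratio_setI[OF assms(1)] diag_form_zero[OF assms(3)]
      diag_form_represents_valuation_differences[OF assms])

lemma multiplicity_diag_form_prime_powers_mod:
  assumes p: "prime p" and "s \<le> n" and nz: "diag_form s n (\<lambda>i. int p ^ i) x \<noteq> 0"
  shows "multiplicity (int p) (diag_form s n (\<lambda>i. int p ^ i) x) mod n < s"
proof -
  define f where "f l = int p ^ l * x l ^ n" for l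
  have F: "diag_form s n (\<lambda>i. int p ^ i) x = sum f {..<s}" unfolding diag_form_def f_def ..
  have mult_f_mod: "multiplicity (int p) (f l) mod n = l" if "l < s" "f l \<noteq> 0" for l
  proof -
    have "x l \<noteq> 0" using that \<open>s \<le> n\<close> unfolding f_def by (auto simp: zero_power)
    then show ?thesis
      using multiplicity_prime_power_mult_power[OF p] that(1) \<open>s \<le> n\<close> unfolding f_def by simp
  qed
  have distinct: "i = j" if "i \<in> {..<s}" "j \<in> {..<s}" "f i \<noteq> 0" "f j \<noteq> 0"
      "multiplicity (int p) (f i) = multiplicity (int p) (f j)" for i j
    using mult_f_mod[of i] mult_f_mod[of j] that by (metis lessThan_iff)
  obtain l where "l \<in> {..<s}" "f l \<noteq> 0"
      "multiplicity (int p) (sum f {..<s}) = multiplicity (int p) (f l)"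
    using multiplicity_sum_eq_term[OF finite_lessThan nz[unfolded F] distinct] by blast
  then show ?thesis using mult_f_mod unfolding F by simp
qed

lemma diag_form_prime_powers_not_padic_dense:
  assumes p: "prime p" and "0 < s" "2 * s \<le> n"
  shows "\<not> padic_dense p (ratio_set s (diag_form s n (\<lambda>i. int p ^ i)))"
proof
  define F where "F = diag_form s n (\<lambda>i. int p ^ i)"
  assume "padic_dense p (ratio_set s F)"
  moreover have "real p powr - real s > 0" using prime_gt_0_nat[OF p] by simp
  ultimately obtain t where "t \<in> ratio_set s F" and
    close: "padic_abs p (t - of_int (int p ^ s)) < real p powr - real s"
    unfolding padic_dense_def by blast
  then obtain x y where t: "t = of_int (F x) / of_int (F y)" and "F y \<noteq> 0"
    unfolding ratio_set_def by blast
  have "t - of_int (int p ^ s) = of_int (F x - int p ^ s * F y) / of_int (F y)"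
    using \<open>F y \<noteq> 0\<close> unfolding t by (simp add: field_simps)
  then have "int p ^ (s + multiplicity (int p) (F y) + 1) dvd F x - int p ^ s * F y"
    using close padic_abs_of_int_div_less_iff[OF p \<open>F y \<noteq> 0\<close>] by metis
  moreover have "prime_elem (int p)" "int p ^ s \<noteq> 0" using p by (simp_all add: prime_gt_0_nat)
  then have "multiplicity (int p) (int p ^ s * F y) = s + multiplicity (int p) (F y)"
    using \<open>F y \<noteq> 0\<close> by (simp add: prime_elem_multiplicity_mult_distrib)
  ultimately have mult_Fx: "multiplicity (int p) (F x) = multiplicity (int p) (F y) + s"
    using multiplicity_add_higher[of "int p" "int p ^ s * F y" "F x - int p ^ s * F y"]
      \<open>int p ^ s \<noteq> 0\<close> \<open>F y \<noteq> 0\<close> prime_gt_1_nat[OF p] by (simp add: add.commute)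
  then have "F x \<noteq> 0" using \<open>0 < s\<close> by auto
  have mod_bound: "multiplicity (int p) (F z) mod n < s" if "F z \<noteq> 0" for z
    using multiplicity_diag_form_prime_powers_mod[OF p _ that[unfolded F_def]] \<open>2 * s \<le> n\<close>
    unfolding F_def by simp
  define m where "m = multiplicity (int p) (F y)"
  have "m mod n < s" using mod_bound[OF \<open>F y \<noteq> 0\<close>] unfolding m_def .
  have "(m + s) mod n = (m mod n + s) mod n" by (simp add: mod_add_left_eq)
  also have "\<dots> = m mod n + s" using \<open>m mod n < s\<close> \<open>2 * s \<le> n\<close> by simp
  finally show False using mod_bound[OF \<open>F x \<noteq> 0\<close>] mult_Fx unfolding m_def by simp
qed

theorem corollary1p4:
  fixes n p :: nat
  assumes "n \<ge> 3" and "prime p" and "coprime n (p * (p - 1))"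
  shows "(\<forall>r \<ge> n div 2 + 1. \<forall>a :: nat \<Rightarrow> int. (\<forall>i<r. a i \<noteq> 0) \<longrightarrow>
            padic_dense p (ratio_set r (diag_form r n a)))
       \<and> (\<exists>a :: nat \<Rightarrow> int. (\<forall>i < n div 2. a i \<noteq> 0) \<and>
            \<not> padic_dense p (ratio_set (n div 2) (diag_form (n div 2) n a)))"
proof
  show "\<forall>r \<ge> n div 2 + 1. \<forall>a :: nat \<Rightarrow> int. (\<forall>i<r. a i \<noteq> 0) \<longrightarrow>
          padic_dense p (ratio_set r (diag_form r n a))"
    using diag_form_ratio_set_padic_dense[OF assms(2,3)] \<open>n \<ge> 3\<close> by simp
next
  have "\<forall>i < n div 2. int p ^ i \<noteq> 0" using assms(2) by (simp add: prime_gt_0_nat)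
  moreover have "\<not> padic_dense p (ratio_set (n div 2) (diag_form (n div 2) n (\<lambda>i. int p ^ i)))"
    using diag_form_prime_powers_not_padic_dense[OF assms(2)] \<open>n \<ge> 3\<close> by simp
  ultimately show "\<exists>a :: nat \<Rightarrow> int. (\<forall>i < n div 2. a i \<noteq> 0) \<and>
          \<not> padic_dense p (ratio_set (n div 2) (diag_form (n div 2) n a))"
    by blast
qed

end
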